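(* Let $\{|\tilde\psi(l)\rangle\}$ be a projectively continuous path of normalized states, and let $\tilde L(l)$ denote the length of the path $\{|\tilde\psi(l')\rangle\}_{0\le l'\le l}$. Suppose $\tilde L$ is Lipschitz continuous, and for $l_1<l_2$ set $\omega(l_1,l_2)=\sup_{l_1\le l'<l''\le l_2}(\tilde L(l'')-\tilde L(l'))/(l''-l')$. Then for $\delta>0$ (with $l,l+\delta$ in the parameter domain), $$|\langle\tilde\psi(l+\delta)|\tilde\psi(l)\rangle|^2\ \ge\ 1-\omega(l,l+\delta)^2\delta^2.$$
   Context: For states $|\phi_1\rangle,|\phi_2\rangle$, the angular distance is $\Theta(|\phi_1\rangle,|\phi_2\rangle)=\arccos|\langle\phi_2|\phi_1\rangle|$. The length of a projectively continuous path $|\phi(x)\rangle$, $x\in[a,b]$, is $\sup\sum_k\Theta(|\phi(x_{k+1})\rangle,|\phi(x_k)\rangle)$ over all finite subdivisions $a=x_0<\dots<x_m=b$. *)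

theory Defs
  imports "HOL-Analysis.Analysis"
begin

text \<open>States of a Hilbert space are modelled as square-summable families
  indexed by an arbitrary type 'i (every Hilbert space is isomorphic to some l2(I)).\<close>

definition sq_summable :: "('i \<Rightarrow> complex) \<Rightarrow> bool" where
  "sq_summable \<phi> \<longleftrightarrow> (\<lambda>i. (cmod (\<phi> i))\<^sup>2) summable_on UNIV"

definition braket :: "('i \<Rightarrow> complex) \<Rightarrow> ('i \<Rightarrow> complex) \<Rightarrow> complex" where
  "braket \<phi> \<psi> = (\<Sum>\<^sub>\<infinity> i. cnj (\<phi> i) * \<psi> i)"

definition normalized :: "('i \<Rightarrow> complex) \<Rightarrow> bool" where
  "normalized \<phi> \<longleftrightarrow> sq_summable \<phi> \<and> braket \<phi> \<phi> = 1"

definition ang_dist :: "('i \<Rightarrow> complex) \<Rightarrow> ('i \<Rightarrow> complex) \<Rightarrow> real" where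
  "ang_dist \<phi>1 \<phi>2 = arccos (cmod (braket \<phi>2 \<phi>1))"

definition proj_continuous_on :: "real set \<Rightarrow> (real \<Rightarrow> 'i \<Rightarrow> complex) \<Rightarrow> bool" where
  "proj_continuous_on S \<psi> \<longleftrightarrow>
     (\<forall>x\<in>S. ((\<lambda>y. ang_dist (\<psi> y) (\<psi> x)) \<longlongrightarrow> 0) (at x within S))"

definition path_length :: "(real \<Rightarrow> 'i \<Rightarrow> complex) \<Rightarrow> real \<Rightarrow> real \<Rightarrow> ereal" where
  "path_length \<psi> a b =
     Sup {ereal (\<Sum>k<m. ang_dist (\<psi> (x (Suc k))) (\<psi> (x k))) | m x.
            x 0 = a \<and> x m = b \<and> (\<forall>k<m. x k < x (Suc k))}"

end

theory Submission
  imports Defs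
begin

text \<open>Appending the chord from l to l + delta to any subdivision of [0, l] gives a
  subdivision of [0, l + delta], so L(l) + Theta \<le> L(l + delta), where Theta is the angular
  distance between psi(l) and psi(l + delta).  Hence Theta \<le> L(l + delta) - L(l) \<le> omega delta
  (the Lipschitz bound only serves to make omega a finite supremum), and
  |(psi(l + delta)|psi(l))|^2 = cos^2 Theta = 1 - sin^2 Theta \<ge> 1 - Theta^2.\<close>

lemma braket_commute_cnj: "braket \<phi> \<psi> = cnj (braket \<psi> \<phi>)"
proof -
  have "cnj (braket \<psi> \<phi>) = (\<Sum>\<^sub>\<infinity> i. cnj (cnj (\<psi> i) * \<phi> i))"
    unfolding braket_def by (rule infsum_cnj[symmetric])
  also have "\<dots> = braket \<phi> \<psi>"
    unfolding braket_def by (simp add: mult.commute)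
  finally show ?thesis by simp
qed

lemma cmod_braket_commute: "cmod (braket \<phi> \<psi>) = cmod (braket \<psi> \<phi>)"
  by (subst braket_commute_cnj) simp

lemma path_length_add_chord_le:
  assumes "l < l'"
  shows "path_length \<psi> a l + ereal (ang_dist (\<psi> l') (\<psi> l)) \<le> path_length \<psi> a l'"
proof -
  let ?\<Theta> = "ang_dist (\<psi> l') (\<psi> l)"
  have "path_length \<psi> a l \<le> path_length \<psi> a l' - ereal ?\<Theta>"
    unfolding path_length_def[of \<psi> a l]
  proof (rule Sup_least, elim CollectE exE conjE)
    fix z m and x :: "nat \<Rightarrow> real"
    assume z: "z = ereal (\<Sum>k<m. ang_dist (\<psi> (x (Suc k))) (\<psi> (x k)))"
      and x0: "x 0 = a" and xm: "x m = l" and inc: "\<forall>k<m. x k < x (Suc k)"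
    define y where "y = x(Suc m := l')"
    have y_inc: "\<forall>k<Suc m. y k < y (Suc k)"
      using inc xm assms by (auto simp: y_def less_Suc_eq)
    have "(\<Sum>k<Suc m. ang_dist (\<psi> (y (Suc k))) (\<psi> (y k)))
        = (\<Sum>k<m. ang_dist (\<psi> (x (Suc k))) (\<psi> (x k))) + ?\<Theta>"
      using xm by (simp add: y_def)
    moreover have "ereal (\<Sum>k<Suc m. ang_dist (\<psi> (y (Suc k))) (\<psi> (y k))) \<le> path_length \<psi> a l'"
      unfolding path_length_def
      by (rule Sup_upper) (use x0 y_inc in \<open>fastforce simp: y_def\<close>)
    ultimately show "z \<le> path_length \<psi> a l' - ereal ?\<Theta>"
      by (simp add: z ereal_le_minus)
  qed
  thus ?thesis by (simp add: ereal_le_minus)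
qed

lemma bdd_above_difference_quotients:
  fixes f :: "real \<Rightarrow> real"
  assumes "K-lipschitz_on S f" and "{a..b} \<subseteq> S"
  shows "bdd_above {(f y - f x) / (y - x) | x y. a \<le> x \<and> x < y \<and> y \<le> b}"
proof (rule bdd_aboveI[where M = K], clarify)
  fix x y :: real assume xy: "a \<le> x" "x < y" "y \<le> b"
  have "dist (f y) (f x) \<le> K * dist y x"
    by (rule lipschitz_onD[OF assms(1)]) (use xy assms(2) in auto)
  hence "f y - f x \<le> K * (y - x)" using xy by (simp add: dist_real_def)
  thus "(f y - f x) / (y - x) \<le> K" using xy by (simp add: divide_le_eq)
qed

lemma difference_quotient_le_Sup:
  fixes f :: "real \<Rightarrow> real"
  assumes "bdd_above {(f y - f x) / (y - x) | x y. a \<le> x \<and> x < y \<and> y \<le> b}" and "a < b"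
  shows "f b - f a \<le> Sup {(f y - f x) / (y - x) | x y. a \<le> x \<and> x < y \<and> y \<le> b} * (b - a)"
proof -
  have "(f b - f a) / (b - a) \<le> Sup {(f y - f x) / (y - x) | x y. a \<le> x \<and> x < y \<and> y \<le> b}"
    by (rule cSup_upper[OF _ assms(1)]) (use assms(2) in blast)
  thus ?thesis using assms(2) by (simp add: divide_le_eq)
qed

text \<open>For c > 1, arccos c is a junk value; the bound then holds since c^2 \<ge> 1.\<close>
lemma one_minus_square_le_square_if_arccos_le:
  fixes c t :: real
  assumes "0 \<le> c" and "arccos c \<le> t"
  shows "1 - t\<^sup>2 \<le> c\<^sup>2"
proof (cases "c \<le> 1")
  case True
  define \<Theta> where "\<Theta> = arccos c"
  have "0 \<le> \<Theta>" using assms True by (simp add: \<Theta>_def arccos_lbound)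
  hence "\<Theta>\<^sup>2 \<le> t\<^sup>2" using assms(2) by (simp add: \<Theta>_def power_mono)
  moreover have "(sin \<Theta>)\<^sup>2 \<le> \<Theta>\<^sup>2"
    using abs_sin_x_le_abs_x[of \<Theta>] by (metis abs_ge_zero power2_abs power_mono)
  moreover have "c\<^sup>2 = 1 - (sin \<Theta>)\<^sup>2"
    using assms True sin_cos_squared_add[of \<Theta>] by (simp add: \<Theta>_def cos_arccos)
  ultimately show ?thesis by linarith
next
  case False
  hence "1 \<le> c\<^sup>2" by (simp add: one_le_power)
  moreover have "0 \<le> t\<^sup>2" by simp
  ultimately show ?thesis by linarith
qed

theorem lemma7:
  fixes \<psi> :: "real \<Rightarrow> 'i \<Rightarrow> complex" and L :: "real \<Rightarrow> real"
    and T l \<delta> :: real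
  assumes norm: "\<forall>x\<in>{0..T}. normalized (\<psi> x)"
    and cont: "proj_continuous_on {0..T} \<psi>"
    and len: "\<forall>x\<in>{0..T}. path_length \<psi> 0 x = ereal (L x)"
    and lip: "\<exists>K. K-lipschitz_on {0..T} L"
    and "\<delta> > 0" and "0 \<le> l" and "l + \<delta> \<le> T"
  shows "(cmod (braket (\<psi> (l + \<delta>)) (\<psi> l)))\<^sup>2 \<ge>
           1 - (Sup {(L l'' - L l') / (l'' - l') | l' l''. l \<le> l' \<and> l' < l'' \<and> l'' \<le> l + \<delta>})\<^sup>2
               * \<delta>\<^sup>2"
proof -
  let ?\<omega> = "Sup {(L l'' - L l') / (l'' - l') | l' l''. l \<le> l' \<and> l' < l'' \<and> l'' \<le> l + \<delta>}"
  let ?c = "cmod (braket (\<psi> (l + \<delta>)) (\<psi> l))"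
  have "L l + ang_dist (\<psi> (l + \<delta>)) (\<psi> l) \<le> L (l + \<delta>)"
    using path_length_add_chord_le[of l "l + \<delta>" \<psi> 0] len assms by simp
  moreover obtain K where "K-lipschitz_on {0..T} L" using lip by blast
  hence "L (l + \<delta>) - L l \<le> ?\<omega> * \<delta>"
    using difference_quotient_le_Sup[OF bdd_above_difference_quotients, of K "{0..T}" L l "l + \<delta>"]
      assms by simp
  ultimately have "arccos ?c \<le> ?\<omega> * \<delta>"
    by (simp add: ang_dist_def cmod_braket_commute)
  hence "1 - (?\<omega> * \<delta>)\<^sup>2 \<le> ?c\<^sup>2"
    by (intro one_minus_square_le_square_if_arccos_le) simp_all
  thus ?thesis by (simp add: power_mult_distrib)
qed

end
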